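(* Let $m,n\in\mathbb{N}$, $\varepsilon\in\mathbb{R}$, $\bar g=-4\,du\,dv+\bar\rho^2\mathring\gamma_{\mathbb{S}^{n-1}}-\tau^2\mathring\gamma_{\mathbb{S}^{m-1}}$ with $\bar\rho=r+2\varepsilon f$. Define on $\mathfrak{D}=\{f>0\}$ \[ \bar h:=\frac12+\frac{\varepsilon f}{2\bar\rho},\qquad \bar\pi:=\bar\nabla^2f-\bar h\,\bar g,\qquad \bar w:=\frac12\bar\square f-\bar h=\frac{n+m-2}{4}+\frac{(n-2)\varepsilon f}{2\bar\rho}, \] and $T:=\tfrac12 f^{-1/2}(-u\partial_u+v\partial_v)$, $N:=\tfrac12 f^{-1/2}(u\partial_u+v\partial_v)$. Then, with respect to the frame consisting of $T$, $N$, the spatial angular coordinate directions (indices $a,b$) and the temporal angular coordinate directions (indices $C,D$), the nonzero components of $\bar\pi$ are \[ \bar\pi_{TT}=\frac{\varepsilon f}{2\bar\rho},\qquad \bar\pi_{ab}=\frac{\varepsilon f}{2\bar\rho}\bar g_{ab},\qquad \bar\pi_{CD}=-\frac{\varepsilon f}{2\bar\rho}\bar g_{CD},\qquad \bar\pi_{NN}=-\frac{\varepsilon f}{2\bar\rho}. \] Moreover \[ \bar\square\bar w=-\frac{(n-2)\varepsilon}{2\bar\rho}\left[\frac{(n-3)f}{\bar\rho^2}-\frac{(n+m-2)r}{2\bar\rho}\right]. \]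
   Context: On $\mathbb{R}^{m+n}$ with Cartesian coordinates $t\in\mathbb{R}^m$, $x\in\mathbb{R}^n$: $r=|x|$, $\tau=|t|$, $u=\frac12(\tau-r)$, $v=\frac12(\tau+r)$, $f=-uv=\frac14(|x|^2-|t|^2)$. On $\{\tau\ne0,r\ne0\}$ one uses coordinates $(u,v,\omega_x,\omega_t)$ with $\omega_x\in\mathbb{S}^{n-1}$, $\omega_t\in\mathbb{S}^{m-1}$; $\partial_u,\partial_v$ are the coordinate vector fields; $a,b$ index local coordinates on $\mathbb{S}^{n-1}$ and $C,D$ local coordinates on $\mathbb{S}^{m-1}$; $\mathring\gamma$ denotes unit round metrics. $\bar\nabla$ is the Levi-Civita connection of $\bar g$, $\bar\nabla^2f$ the Hessian, $\bar\square=\bar g^{\alpha\beta}\bar\nabla_{\alpha\beta}$. *)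

theory Defs
  imports "HOL-Analysis.Analysis"
begin

(* Coordinates on an open piece of R^(m+n): a point is p :: nat => real, only indices
   < n+m matter.  Index 0 = u, index 1 = v, indices 2 .. n = local coordinates
   (theta_1..theta_{n-1}) on S^(n-1) (indices a,b), indices n+1 .. n+m-1 = local
   coordinates on S^(m-1) (indices C,D). *)

definition pdiff :: "nat \<Rightarrow> ((nat \<Rightarrow> real) \<Rightarrow> real) \<Rightarrow> (nat \<Rightarrow> real) \<Rightarrow> real" where
  "pdiff i F p = deriv (\<lambda>s. F (p(i := s))) (p i)"

definition mat_inv :: "nat \<Rightarrow> (nat \<Rightarrow> nat \<Rightarrow> real) \<Rightarrow> nat \<Rightarrow> nat \<Rightarrow> real" where
  "mat_inv d G = (SOME H. \<forall>i<d. \<forall>j<d. (\<Sum>k<d. G i k * H k j) = (if i = j then 1 else 0))"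

definition christoffel ::
  "nat \<Rightarrow> ((nat \<Rightarrow> real) \<Rightarrow> nat \<Rightarrow> nat \<Rightarrow> real) \<Rightarrow> (nat \<Rightarrow> real) \<Rightarrow> nat \<Rightarrow> nat \<Rightarrow> nat \<Rightarrow> real" where
  "christoffel d g p k i j =
     (\<Sum>l<d. mat_inv d (g p) k l *
        (pdiff i (\<lambda>q. g q j l) p + pdiff j (\<lambda>q. g q i l) p - pdiff l (\<lambda>q. g q i j) p)) / 2"

definition hessian ::
  "nat \<Rightarrow> ((nat \<Rightarrow> real) \<Rightarrow> nat \<Rightarrow> nat \<Rightarrow> real) \<Rightarrow> ((nat \<Rightarrow> real) \<Rightarrow> real) \<Rightarrow> (nat \<Rightarrow> real) \<Rightarrow> nat \<Rightarrow> nat \<Rightarrow> real" where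
  "hessian d g F p i j = pdiff i (\<lambda>q. pdiff j F q) p - (\<Sum>k<d. christoffel d g p k i j * pdiff k F p)"

definition dalembert ::
  "nat \<Rightarrow> ((nat \<Rightarrow> real) \<Rightarrow> nat \<Rightarrow> nat \<Rightarrow> real) \<Rightarrow> ((nat \<Rightarrow> real) \<Rightarrow> real) \<Rightarrow> (nat \<Rightarrow> real) \<Rightarrow> real" where
  "dalembert d g F p = (\<Sum>i<d. \<Sum>j<d. mat_inv d (g p) i j * hessian d g F p i j)"

definition bilin :: "nat \<Rightarrow> (nat \<Rightarrow> nat \<Rightarrow> real) \<Rightarrow> (nat \<Rightarrow> real) \<Rightarrow> (nat \<Rightarrow> real) \<Rightarrow> real" where
  "bilin d B X Y = (\<Sum>i<d. \<Sum>j<d. X i * Y j * B i j)"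

definition u_of :: "(nat \<Rightarrow> real) \<Rightarrow> real" where "u_of p = p 0"
definition v_of :: "(nat \<Rightarrow> real) \<Rightarrow> real" where "v_of p = p 1"
definition tau_of :: "(nat \<Rightarrow> real) \<Rightarrow> real" where "tau_of p = u_of p + v_of p"
definition r_of :: "(nat \<Rightarrow> real) \<Rightarrow> real" where "r_of p = v_of p - u_of p"
definition f_of :: "(nat \<Rightarrow> real) \<Rightarrow> real" where "f_of p = - u_of p * v_of p"
definition rho_of :: "real \<Rightarrow> (nat \<Rightarrow> real) \<Rightarrow> real" where
  "rho_of \<epsilon> p = r_of p + 2 * \<epsilon> * f_of p"

definition ang_x :: "nat \<Rightarrow> (nat \<Rightarrow> real) \<Rightarrow> nat \<Rightarrow> real" where
  "ang_x n p = (\<lambda>a. if a < n - 1 then p (Suc (Suc a)) else 0)"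
definition ang_t :: "nat \<Rightarrow> nat \<Rightarrow> (nat \<Rightarrow> real) \<Rightarrow> nat \<Rightarrow> real" where
  "ang_t n m p = (\<lambda>c. if c < m - 1 then p (n + 1 + c) else 0)"

definition is_x :: "nat \<Rightarrow> nat \<Rightarrow> bool" where "is_x n i \<longleftrightarrow> 2 \<le> i \<and> i < n + 1"
definition is_t :: "nat \<Rightarrow> nat \<Rightarrow> nat \<Rightarrow> bool" where "is_t n m i \<longleftrightarrow> n + 1 \<le> i \<and> i < n + m"

(* unit round metric of S^k in the local coordinates given by a parametrisation
   phi : R^k -> S^k \<subseteq> R^(k+1):  pull-back of the Euclidean metric *)
definition sphere_metric :: "nat \<Rightarrow> ((nat \<Rightarrow> real) \<Rightarrow> nat \<Rightarrow> real) \<Rightarrow> (nat \<Rightarrow> real) \<Rightarrow> nat \<Rightarrow> nat \<Rightarrow> real" where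
  "sphere_metric k \<phi> \<theta> a b =
     (\<Sum>j<Suc k. pdiff a (\<lambda>\<eta>. \<phi> \<eta> j) \<theta> * pdiff b (\<lambda>\<eta>. \<phi> \<eta> j) \<theta>)"

definition local_sphere_chart :: "nat \<Rightarrow> ((nat \<Rightarrow> real) \<Rightarrow> nat \<Rightarrow> real) \<Rightarrow> (nat \<Rightarrow> real) \<Rightarrow> bool" where
  "local_sphere_chart k \<phi> \<theta>0 \<longleftrightarrow>
     (\<exists>e>0. \<forall>\<theta>. (\<forall>a<k. \<bar>\<theta> a - \<theta>0 a\<bar> < e) \<and> (\<forall>a\<ge>k. \<theta> a = 0) \<longrightarrow>
        (\<Sum>j<Suc k. (\<phi> \<theta> j)\<^sup>2) = 1 \<and>
        (\<forall>a<k. \<forall>j<Suc k. (\<lambda>s. \<phi> (\<theta>(a := s)) j) differentiable (at (\<theta> a))) \<and>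
        (\<exists>H. \<forall>a<k. \<forall>b<k. (\<Sum>c<k. sphere_metric k \<phi> \<theta> a c * H c b) = (if a = b then 1 else 0)))"

definition gbar :: "nat \<Rightarrow> nat \<Rightarrow> real \<Rightarrow> ((nat \<Rightarrow> real) \<Rightarrow> nat \<Rightarrow> real) \<Rightarrow> ((nat \<Rightarrow> real) \<Rightarrow> nat \<Rightarrow> real)
     \<Rightarrow> (nat \<Rightarrow> real) \<Rightarrow> nat \<Rightarrow> nat \<Rightarrow> real" where
  "gbar n m \<epsilon> \<phi>x \<phi>t p i j =
     (if (i = 0 \<and> j = 1) \<or> (i = 1 \<and> j = 0) then -2
      else if is_x n i \<and> is_x n j then
        (rho_of \<epsilon> p)\<^sup>2 * sphere_metric (n - 1) \<phi>x (ang_x n p) (i - 2) (j - 2)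
      else if is_t n m i \<and> is_t n m j then
        - (tau_of p)\<^sup>2 * sphere_metric (m - 1) \<phi>t (ang_t n m p) (i - (n + 1)) (j - (n + 1))
      else 0)"

definition hbar :: "real \<Rightarrow> (nat \<Rightarrow> real) \<Rightarrow> real" where
  "hbar \<epsilon> p = 1/2 + \<epsilon> * f_of p / (2 * rho_of \<epsilon> p)"

definition pibar :: "nat \<Rightarrow> nat \<Rightarrow> real \<Rightarrow> ((nat \<Rightarrow> real) \<Rightarrow> nat \<Rightarrow> real) \<Rightarrow> ((nat \<Rightarrow> real) \<Rightarrow> nat \<Rightarrow> real)
     \<Rightarrow> (nat \<Rightarrow> real) \<Rightarrow> nat \<Rightarrow> nat \<Rightarrow> real" where
  "pibar n m \<epsilon> \<phi>x \<phi>t p i j =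
     hessian (n + m) (gbar n m \<epsilon> \<phi>x \<phi>t) f_of p i j - hbar \<epsilon> p * gbar n m \<epsilon> \<phi>x \<phi>t p i j"

definition wbar :: "nat \<Rightarrow> nat \<Rightarrow> real \<Rightarrow> ((nat \<Rightarrow> real) \<Rightarrow> nat \<Rightarrow> real) \<Rightarrow> ((nat \<Rightarrow> real) \<Rightarrow> nat \<Rightarrow> real)
     \<Rightarrow> (nat \<Rightarrow> real) \<Rightarrow> real" where
  "wbar n m \<epsilon> \<phi>x \<phi>t p = dalembert (n + m) (gbar n m \<epsilon> \<phi>x \<phi>t) f_of p / 2 - hbar \<epsilon> p"

(* frame: 0 = T, 1 = N, other indices = coordinate vector fields *)
definition frame :: "(nat \<Rightarrow> real) \<Rightarrow> nat \<Rightarrow> nat \<Rightarrow> real" where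
  "frame p \<alpha> =
     (if \<alpha> = 0 then (\<lambda>i. if i = 0 then - u_of p / (2 * sqrt (f_of p))
                        else if i = 1 then v_of p / (2 * sqrt (f_of p)) else 0)
      else if \<alpha> = 1 then (\<lambda>i. if i = 0 then u_of p / (2 * sqrt (f_of p))
                        else if i = 1 then v_of p / (2 * sqrt (f_of p)) else 0)
      else (\<lambda>i. if i = \<alpha> then 1 else 0))"

end

theory Submission
  imports Defs
begin

(* In the null coordinates (u, v) the metric is -4 du dv plus two angular blocks, warped by
   rho^2 and -tau^2, whose warping factors depend on (u, v) only.  Hence the only Christoffel
   symbols with a null upper index are Gamma^u_ij = d_v g_ij / 4 and Gamma^v_ij = d_u g_ij / 4,
   and for a function F of (u, v) alone
     nabla^2 F_ij = d_i d_j F - g_ij (d_v(log w_i) d_u F + d_u(log w_i) d_v F) / 4,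
   w_i being the warping factor of row i.  For f = -uv this makes pibar equal to
   (eps f / rho) (du dv + dv du) on the null block, which the frame T, N diagonalises into
   +-eps f / (2 rho), and a multiple +-eps f / (2 rho) of gbar on each angular block.  Taking the
   trace gives box f = (n + m) / 2 + (n - 1) eps f / rho, so wbar is again a function of (u, v)
   alone and one more application of the formula computes box wbar. *)

(* Coordinate indices are numerals; keep the simplifier from rewriting 1 to Suc 0. *)
declare One_nat_def [simp del]

lemma pdiff_eqI:
  assumes "((\<lambda>s. F (q(k := s))) has_real_derivative D) (at (q k))"
  shows "pdiff k F q = D"
  using assms by (simp add: pdiff_def DERIV_imp_deriv)

lemma pdiff_const_along:
  assumes "\<And>s. F (q(k := s)) = c"
  shows "pdiff k F q = 0"
  using assms by (simp add: pdiff_def)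

lemma pdiff_cong_eventually:
  assumes "eventually (\<lambda>s. F (q(k := s)) = F' (q(k := s))) (nhds (q k))"
  shows "pdiff k F q = pdiff k F' q"
  unfolding pdiff_def by (rule deriv_cong_ev) (use assms in auto)

lemma sum_lessThan_two:
  fixes d :: nat
  assumes "2 \<le> d" and "\<And>i. 2 \<le> i \<Longrightarrow> i < d \<Longrightarrow> F i = 0"
  shows "(\<Sum>i<d. F i) = F 0 + F 1"
proof -
  have "(\<Sum>i<d. F i) = (\<Sum>i\<in>{0, 1}. F i)"
    by (rule sum.mono_neutral_right) (use assms in auto)
  then show ?thesis by simp
qed

lemma sum_lessThan_block:
  fixes d :: nat
  assumes "a + l \<le> d" and "\<And>k. k < d \<Longrightarrow> \<not> (a \<le> k \<and> k < a + l) \<Longrightarrow> F k = 0"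
  shows "(\<Sum>k<d. F k) = (\<Sum>c<l. F (a + c))"
proof -
  have "(\<Sum>k<d. F k) = (\<Sum>k\<in>{a..<a + l}. F k)"
    by (rule sum.mono_neutral_right) (use assms in auto)
  also have "\<dots> = (\<Sum>c<l. F (a + c))"
    by (simp add: sum.atLeastLessThan_shift_0[of _ a] atLeast0LessThan)
  finally show ?thesis .
qed

definition has_right_inverse :: "nat \<Rightarrow> (nat \<Rightarrow> nat \<Rightarrow> real) \<Rightarrow> bool" where
  "has_right_inverse d A \<longleftrightarrow>
     (\<exists>H. \<forall>i<d. \<forall>j<d. (\<Sum>k<d. A i k * H k j) = (if i = j then 1 else 0))"

lemma mat_inv_right_inverse:
  assumes "has_right_inverse d A" and "i < d" and "j < d"
  shows "(\<Sum>k<d. A i k * mat_inv d A k j) = (if i = j then 1 else 0)"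
proof -
  have "\<forall>i<d. \<forall>j<d. (\<Sum>k<d. A i k * mat_inv d A k j) = (if i = j then 1 else 0)"
    using assms(1) unfolding has_right_inverse_def mat_inv_def by (rule someI_ex)
  then show ?thesis using assms(2,3) by blast
qed

text \<open>For symmetric \<open>A\<close>, \<open>H\<^sup>T\<close> is a left inverse, so \<open>H\<^sup>T = H\<^sup>T A H = H\<close>.\<close>

lemma right_inverse_symmetric:
  fixes A H :: "nat \<Rightarrow> nat \<Rightarrow> real"
  assumes sym: "\<And>i j. i < d \<Longrightarrow> j < d \<Longrightarrow> A i j = A j i"
    and inv: "\<And>i j. i < d \<Longrightarrow> j < d \<Longrightarrow> (\<Sum>k<d. A i k * H k j) = (if i = j then 1 else 0)"
    and "i < d" and "j < d"
  shows "H i j = H j i"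
proof -
  have left_inv: "(\<Sum>l<d. H l i * A l k) = (if i = k then 1 else 0)" if "k < d" for k
  proof -
    have "(\<Sum>l<d. H l i * A l k) = (\<Sum>l<d. A k l * H l i)"
      by (intro sum.cong refl) (use sym that in auto)
    then show ?thesis using inv[OF that \<open>i < d\<close>] by auto
  qed
  have "H i j = (\<Sum>k<d. (if i = k then 1 else 0) * H k j)"
    using \<open>i < d\<close> by (simp add: if_distrib[of "\<lambda>x. x * _"] cong: if_cong)
  also have "\<dots> = (\<Sum>k<d. (\<Sum>l<d. H l i * A l k) * H k j)"
    by (intro sum.cong refl) (simp add: left_inv)
  also have "\<dots> = (\<Sum>l<d. H l i * (\<Sum>k<d. A l k * H k j))"
    by (simp add: sum_distrib_left sum_distrib_right mult.assoc) (rule sum.swap)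
  also have "\<dots> = (\<Sum>l<d. H l i * (if l = j then 1 else 0))"
    by (intro sum.cong refl) (simp add: inv \<open>j < d\<close>)
  also have "\<dots> = H j i"
    using \<open>j < d\<close> by (simp add: if_distrib[of "\<lambda>x. _ * x"] cong: if_cong)
  finally show ?thesis .
qed

section \<open>Metrics of the form \<open>-4 du dv\<close> plus warped blocks\<close>

locale null_warped_metric =
  fixes d :: nat and g :: "(nat \<Rightarrow> real) \<Rightarrow> nat \<Rightarrow> nat \<Rightarrow> real"
    and U :: "(nat \<Rightarrow> real) set" and warp :: "nat \<Rightarrow> (nat \<Rightarrow> real) \<Rightarrow> nat \<Rightarrow> real"
  assumes two_le_dim: "2 \<le> d"
    and symmetric: "g q i j = g q j i"
    and row_u: "g q 0 j = (if j = 1 then -2 else 0)"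
    and row_v: "g q 1 j = (if j = 0 then -2 else 0)"
    and invertible: "q \<in> U \<Longrightarrow> has_right_inverse d (g q)"
    and pdiff_null: "q \<in> U \<Longrightarrow> k < 2 \<Longrightarrow> pdiff k (\<lambda>q. g q i j) q = warp k q i * g q i j"
begin

abbreviation ginv :: "(nat \<Rightarrow> real) \<Rightarrow> nat \<Rightarrow> nat \<Rightarrow> real" where
  "ginv q \<equiv> mat_inv d (g q)"

lemma ginv_right_inverse:
  "q \<in> U \<Longrightarrow> i < d \<Longrightarrow> j < d \<Longrightarrow> (\<Sum>k<d. g q i k * ginv q k j) = (if i = j then 1 else 0)"
  by (rule mat_inv_right_inverse[OF invertible])

lemma ginv_symmetric: "q \<in> U \<Longrightarrow> i < d \<Longrightarrow> j < d \<Longrightarrow> ginv q i j = ginv q j i"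
  by (rule right_inverse_symmetric[where A = "g q"]) (use symmetric ginv_right_inverse in auto)

lemma col_u: "g q j 0 = (if j = 1 then -2 else 0)"
  by (metis row_u symmetric)

lemma col_v: "g q j 1 = (if j = 0 then -2 else 0)"
  by (metis row_v symmetric)

lemma ginv_row_u:
  assumes "q \<in> U" and "j < d"
  shows "ginv q 0 j = (if j = 1 then -1/2 else 0)"
proof -
  have "(\<Sum>k<d. g q 1 k * ginv q k j) = -2 * ginv q 0 j"
    using two_le_dim by (simp add: row_v if_distrib[of "\<lambda>x. x * _"] cong: if_cong)
  then show ?thesis using ginv_right_inverse[OF assms(1) _ assms(2), of 1] two_le_dim by auto
qed

lemma ginv_row_v:
  assumes "q \<in> U" and "j < d"
  shows "ginv q 1 j = (if j = 0 then -1/2 else 0)"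
proof -
  have "(\<Sum>k<d. g q 0 k * ginv q k j) = -2 * ginv q 1 j"
    using two_le_dim by (simp add: row_u if_distrib[of "\<lambda>x. x * _"] cong: if_cong)
  then show ?thesis using ginv_right_inverse[OF assms(1) _ assms(2), of 0] two_le_dim by auto
qed

lemma ginv_col_u: "q \<in> U \<Longrightarrow> j < d \<Longrightarrow> ginv q j 0 = (if j = 1 then -1/2 else 0)"
  using ginv_row_u[of q j] ginv_symmetric[of q j 0] two_le_dim by simp

lemma ginv_col_v: "q \<in> U \<Longrightarrow> j < d \<Longrightarrow> ginv q j 1 = (if j = 0 then -1/2 else 0)"
  using ginv_row_v[of q j] ginv_symmetric[of q j 1] two_le_dim by simp

text \<open>Rows \<open>u\<close> and \<open>v\<close> of the inverse metric only see the constant block \<open>-4 du dv\<close>.\<close>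

lemma christoffel_u:
  assumes "q \<in> U"
  shows "christoffel d g q 0 i j = warp 1 q i * g q i j / 4"
proof -
  have "christoffel d g q 0 i j =
      - (pdiff i (\<lambda>q. g q j 1) q + pdiff j (\<lambda>q. g q i 1) q - pdiff 1 (\<lambda>q. g q i j) q) / 4"
    unfolding christoffel_def using two_le_dim
    by (simp add: ginv_row_u[OF assms] if_distrib[of "\<lambda>x. x * _"] field_simps cong: if_cong)
  moreover have "pdiff i (\<lambda>q. g q j 1) q = 0" "pdiff j (\<lambda>q. g q i 1) q = 0"
    by (rule pdiff_const_along, simp add: col_v)+
  ultimately show ?thesis using pdiff_null[OF assms, of 1] by simp
qed

lemma christoffel_v:
  assumes "q \<in> U"
  shows "christoffel d g q 1 i j = warp 0 q i * g q i j / 4"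
proof -
  have "christoffel d g q 1 i j =
      - (pdiff i (\<lambda>q. g q j 0) q + pdiff j (\<lambda>q. g q i 0) q - pdiff 0 (\<lambda>q. g q i j) q) / 4"
    unfolding christoffel_def using two_le_dim
    by (simp add: ginv_row_v[OF assms] if_distrib[of "\<lambda>x. x * _"] field_simps cong: if_cong)
  moreover have "pdiff i (\<lambda>q. g q j 0) q = 0" "pdiff j (\<lambda>q. g q i 0) q = 0"
    by (rule pdiff_const_along, simp add: col_u)+
  ultimately show ?thesis using pdiff_null[OF assms, of 0] by simp
qed

lemma hessian_eq:
  assumes "q \<in> U" and "\<And>k. 2 \<le> k \<Longrightarrow> k < d \<Longrightarrow> pdiff k F q = 0"
  shows "hessian d g F q i j = pdiff i (\<lambda>q. pdiff j F q) q
           - g q i j * (warp 1 q i * pdiff 0 F q + warp 0 q i * pdiff 1 F q) / 4"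
proof -
  have "(\<Sum>k<d. christoffel d g q k i j * pdiff k F q)
      = christoffel d g q 0 i j * pdiff 0 F q + christoffel d g q 1 i j * pdiff 1 F q"
    by (rule sum_lessThan_two) (use two_le_dim assms(2) in auto)
  then show ?thesis
    unfolding hessian_def christoffel_u[OF assms(1)] christoffel_v[OF assms(1)]
    by (simp add: algebra_simps add_divide_distrib)
qed

lemma trace_warp:
  assumes "q \<in> U"
  shows "(\<Sum>i<d. \<Sum>j<d. ginv q i j * (warp k q i * g q i j)) = (\<Sum>i<d. warp k q i)"
proof (rule sum.cong)
  fix i assume "i \<in> {..<d}"
  then have "(\<Sum>j<d. g q i j * ginv q j i) = 1" using ginv_right_inverse[OF assms] by simp
  moreover have "(\<Sum>j<d. ginv q i j * (warp k q i * g q i j)) = warp k q i * (\<Sum>j<d. g q i j * ginv q j i)"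
    using \<open>i \<in> {..<d}\<close> by (auto simp: sum_distrib_left ginv_symmetric[OF assms] intro!: sum.cong)
  ultimately show "(\<Sum>j<d. ginv q i j * (warp k q i * g q i j)) = warp k q i" by simp
qed simp

lemma dalembert_eq:
  assumes "q \<in> U"
    and "\<And>k. 2 \<le> k \<Longrightarrow> k < d \<Longrightarrow> pdiff k F q = 0"
    and "\<And>i j. 2 \<le> i \<Longrightarrow> i < d \<Longrightarrow> 2 \<le> j \<Longrightarrow> j < d \<Longrightarrow> pdiff i (\<lambda>q. pdiff j F q) q = 0"
  shows "dalembert d g F q =
           - (pdiff 0 (\<lambda>q. pdiff 1 F q) q + pdiff 1 (\<lambda>q. pdiff 0 F q) q) / 2
           - (pdiff 0 F q * (\<Sum>i<d. warp 1 q i) + pdiff 1 F q * (\<Sum>i<d. warp 0 q i)) / 4"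
proof -
  define D where "D i j = pdiff i (\<lambda>q. pdiff j F q) q" for i j
  have null_part: "(\<Sum>i<d. \<Sum>j<d. ginv q i j * D i j) = - (D 0 1 + D 1 0) / 2"
  proof -
    have "(\<Sum>i<d. \<Sum>j<d. ginv q i j * D i j) = (\<Sum>j<d. ginv q 0 j * D 0 j) + (\<Sum>j<d. ginv q 1 j * D 1 j)"
    proof (rule sum_lessThan_two)
      fix i assume i: "2 \<le> i" "i < d"
      have "ginv q i j * D i j = 0" if "j < d" for j
      proof (cases "j < 2")
        case True
        then consider "j = 0" | "j = 1" by linarith
        then show ?thesis using i ginv_col_u[OF assms(1)] ginv_col_v[OF assms(1)] by cases auto
      next
        case False
        then show ?thesis using i that assms(3) by (simp add: D_def)
      qed
      then show "(\<Sum>j<d. ginv q i j * D i j) = 0" by (intro sum.neutral) blast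
    qed (rule two_le_dim)
    then show ?thesis
      using two_le_dim by (simp add: ginv_row_u[OF assms(1)] ginv_row_v[OF assms(1)]
          if_distrib[of "\<lambda>x. x * _"] cong: if_cong)
  qed
  have "dalembert d g F q = (\<Sum>i<d. \<Sum>j<d. ginv q i j * D i j
        - pdiff 0 F q / 4 * (ginv q i j * (warp 1 q i * g q i j))
        - pdiff 1 F q / 4 * (ginv q i j * (warp 0 q i * g q i j)))"
    unfolding dalembert_def D_def
    by (intro sum.cong refl) (simp add: hessian_eq[OF assms(1,2)] algebra_simps add_divide_distrib)
  also have "\<dots> = (\<Sum>i<d. \<Sum>j<d. ginv q i j * D i j)
        - pdiff 0 F q / 4 * (\<Sum>i<d. \<Sum>j<d. ginv q i j * (warp 1 q i * g q i j))
        - pdiff 1 F q / 4 * (\<Sum>i<d. \<Sum>j<d. ginv q i j * (warp 0 q i * g q i j))"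
    by (simp add: sum_subtractf sum_distrib_left)
  also have "\<dots> = - (D 0 1 + D 1 0) / 2
        - pdiff 0 F q / 4 * (\<Sum>i<d. warp 1 q i) - pdiff 1 F q / 4 * (\<Sum>i<d. warp 0 q i)"
    by (simp only: null_part trace_warp[OF assms(1)])
  finally show ?thesis by (simp add: D_def field_simps)
qed

end

section \<open>The functions \<open>f\<close>, \<open>\<rho>\<close> and \<open>f / \<rho>\<close> in null coordinates\<close>

lemma f_of_has_derivative:
  "((\<lambda>s. f_of (q(0 := s))) has_real_derivative - q 1) (at (q 0))"
  "((\<lambda>s. f_of (q(1 := s))) has_real_derivative - q 0) (at (q 1))"
  unfolding f_of_def u_of_def v_of_def by (auto intro!: derivative_eq_intros)

lemma pdiff_f_of: "pdiff k f_of q = (if k = 0 then - q 1 else if k = 1 then - q 0 else 0)"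
proof -
  have "pdiff k f_of q = 0" if "k \<noteq> 0" "k \<noteq> 1"
    using that by (intro pdiff_const_along[where c = "f_of q"]) (simp add: f_of_def u_of_def v_of_def)
  then show ?thesis using f_of_has_derivative[of q, THEN pdiff_eqI] by auto
qed

lemma pdiff_neg_coord: "pdiff i (\<lambda>q. - q l) q = (if i = l then -1 else 0)"
proof (cases "i = l")
  case True
  show ?thesis by (rule pdiff_eqI) (use True in \<open>auto intro!: derivative_eq_intros\<close>)
next
  case False
  then show ?thesis by (simp add: pdiff_const_along)
qed

lemma pdiff_pdiff_f_of:
  "pdiff i (\<lambda>q. pdiff j f_of q) q = (if i = 0 \<and> j = 1 \<or> i = 1 \<and> j = 0 then -1 else 0)"
proof -
  have "(\<lambda>q. pdiff j f_of q) = (\<lambda>q. if j = 0 then - q 1 else if j = 1 then - q 0 else 0)"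
    by (simp add: pdiff_f_of)
  then show ?thesis
    by (cases "j = 0"; cases "j = 1") (auto simp: pdiff_neg_coord pdiff_const_along)
qed

text \<open>\<open>drho \<epsilon> 0 = \<partial>\<^sub>u \<rho>\<close> and \<open>drho \<epsilon> 1 = \<partial>\<^sub>v \<rho>\<close>; other values of \<open>k\<close> are junk.\<close>

definition drho :: "real \<Rightarrow> nat \<Rightarrow> (nat \<Rightarrow> real) \<Rightarrow> real" where
  "drho \<epsilon> k q = (if k = 0 then -1 - 2 * \<epsilon> * q 1 else 1 - 2 * \<epsilon> * q 0)"

lemma rho_of_has_derivative:
  assumes "k < 2"
  shows "((\<lambda>s. rho_of \<epsilon> (q(k := s))) has_real_derivative drho \<epsilon> k q) (at (q k))"
proof -
  consider "k = 0" | "k = 1" using assms by linarith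
  then show ?thesis
    by cases (auto simp: rho_of_def r_of_def f_of_def u_of_def v_of_def drho_def
        intro!: derivative_eq_intros)
qed

lemma tau_of_has_derivative:
  assumes "k < 2"
  shows "((\<lambda>s. tau_of (q(k := s))) has_real_derivative 1) (at (q k))"
proof -
  consider "k = 0" | "k = 1" using assms by linarith
  then show ?thesis
    by cases (auto simp: tau_of_def u_of_def v_of_def intro!: derivative_eq_intros)
qed

lemma drho_euler: "q 1 * drho \<epsilon> 1 q + q 0 * drho \<epsilon> 0 q = rho_of \<epsilon> q + 2 * \<epsilon> * f_of q"
  by (simp add: drho_def rho_of_def r_of_def f_of_def u_of_def v_of_def algebra_simps)

lemma drho_weighted:
  "(q 0)\<^sup>2 * drho \<epsilon> 0 q - (q 1)\<^sup>2 * drho \<epsilon> 1 q = 2 * f_of q - r_of q * rho_of \<epsilon> q"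
  by (simp add: drho_def rho_of_def r_of_def f_of_def u_of_def v_of_def algebra_simps power2_eq_square)

lemma square_diff_uv: "(q 0)\<^sup>2 - (q 1)\<^sup>2 = - r_of q * tau_of q"
  by (simp add: r_of_def tau_of_def u_of_def v_of_def algebra_simps power2_eq_square)

definition grad_f_over_rho :: "real \<Rightarrow> nat \<Rightarrow> (nat \<Rightarrow> real) \<Rightarrow> real" where
  "grad_f_over_rho \<epsilon> k q =
     (if k = 0 then - (q 1)\<^sup>2 / (rho_of \<epsilon> q)\<^sup>2 else if k = 1 then (q 0)\<^sup>2 / (rho_of \<epsilon> q)\<^sup>2 else 0)"

lemma f_over_rho_has_derivative:
  assumes "rho_of \<epsilon> q \<noteq> 0" and "k < 2"
  shows "((\<lambda>s. f_of (q(k := s)) / rho_of \<epsilon> (q(k := s))) has_real_derivative grad_f_over_rho \<epsilon> k q)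
           (at (q k))"
proof -
  consider "k = 0" | "k = 1" using assms(2) by linarith
  then show ?thesis
  proof cases
    case 1
    have "(- q 1 * rho_of \<epsilon> q - f_of q * drho \<epsilon> 0 q) = - (q 1)\<^sup>2"
      by (simp add: drho_def rho_of_def r_of_def f_of_def u_of_def v_of_def algebra_simps power2_eq_square)
    with 1 show ?thesis
      using DERIV_divide[OF f_of_has_derivative(1)[of q] rho_of_has_derivative[of 0 \<epsilon> q]] assms(1)
      by (simp add: grad_f_over_rho_def power2_eq_square)
  next
    case 2
    have "(- q 0 * rho_of \<epsilon> q - f_of q * drho \<epsilon> 1 q) = (q 0)\<^sup>2"
      by (simp add: drho_def rho_of_def r_of_def f_of_def u_of_def v_of_def algebra_simps power2_eq_square)
    with 2 show ?thesis
      using DERIV_divide[OF f_of_has_derivative(2)[of q] rho_of_has_derivative[of 1 \<epsilon> q]] assms(1)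
      by (simp add: grad_f_over_rho_def power2_eq_square)
  qed
qed

lemma grad_f_over_rho_has_mixed_derivative:
  assumes "rho_of \<epsilon> q \<noteq> 0"
  shows "((\<lambda>s. grad_f_over_rho \<epsilon> 0 (q(1 := s))) has_real_derivative - 2 * f_of q / (rho_of \<epsilon> q) ^ 3)
           (at (q 1))"
    and "((\<lambda>s. grad_f_over_rho \<epsilon> 1 (q(0 := s))) has_real_derivative - 2 * f_of q / (rho_of \<epsilon> q) ^ 3)
           (at (q 0))"
proof -
  let ?\<rho> = "rho_of \<epsilon> q"
  have "q 1 * (?\<rho> - q 1 * drho \<epsilon> 1 q) = f_of q" "q 0 * (?\<rho> - q 0 * drho \<epsilon> 0 q) = - f_of q"
    by (simp_all add: drho_def rho_of_def r_of_def f_of_def u_of_def v_of_def algebra_simps)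
  moreover have "(2 * q k * ?\<rho>\<^sup>2 - (q k)\<^sup>2 * (2 * (drho \<epsilon> k q * ?\<rho>))) / ?\<rho> ^ 4
      = 2 * (q k * (?\<rho> - q k * drho \<epsilon> k q)) / ?\<rho> ^ 3" for k
  proof -
    have num: "2 * q k * ?\<rho>\<^sup>2 - (q k)\<^sup>2 * (2 * (drho \<epsilon> k q * ?\<rho>))
        = ?\<rho> * (2 * (q k * (?\<rho> - q k * drho \<epsilon> k q)))"
      by (simp add: algebra_simps power2_eq_square)
    have den: "?\<rho> ^ 4 = ?\<rho> * ?\<rho> ^ 3" by (simp add: power4_eq_xxxx power3_eq_cube)
    show ?thesis unfolding num den using assms by (rule mult_divide_mult_cancel_left)
  qed
  ultimately show
    "((\<lambda>s. grad_f_over_rho \<epsilon> 0 (q(1 := s))) has_real_derivative - 2 * f_of q / ?\<rho> ^ 3) (at (q 1))"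
    "((\<lambda>s. grad_f_over_rho \<epsilon> 1 (q(0 := s))) has_real_derivative - 2 * f_of q / ?\<rho> ^ 3) (at (q 0))"
    unfolding grad_f_over_rho_def using assms
    by (auto intro!: derivative_eq_intros rho_of_has_derivative)
qed

definition wbar_formula :: "nat \<Rightarrow> nat \<Rightarrow> real \<Rightarrow> (nat \<Rightarrow> real) \<Rightarrow> real" where
  "wbar_formula n m \<epsilon> q = (real n + real m - 2) / 4 + (real n - 2) * \<epsilon> / 2 * (f_of q / rho_of \<epsilon> q)"

lemma pdiff_wbar_formula:
  assumes "rho_of \<epsilon> q \<noteq> 0"
  shows "pdiff k (wbar_formula n m \<epsilon>) q = (real n - 2) * \<epsilon> / 2 * grad_f_over_rho \<epsilon> k q"
proof (cases "k < 2")
  case True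
  have "((\<lambda>s. wbar_formula n m \<epsilon> (q(k := s))) has_real_derivative
      0 + (real n - 2) * \<epsilon> / 2 * grad_f_over_rho \<epsilon> k q) (at (q k))"
    unfolding wbar_formula_def
    by (intro DERIV_add DERIV_const DERIV_cmult f_over_rho_has_derivative assms True)
  from pdiff_eqI[OF this] show ?thesis by simp
next
  case False
  then have "wbar_formula n m \<epsilon> (q(k := s)) = wbar_formula n m \<epsilon> q" for s
    by (simp add: wbar_formula_def rho_of_def r_of_def f_of_def u_of_def v_of_def)
  then show ?thesis using False by (simp add: pdiff_const_along grad_f_over_rho_def)
qed

lemma pdiff_scaled_grad_f_over_rho:
  assumes "rho_of \<epsilon> q \<noteq> 0"
  shows "pdiff 1 (\<lambda>q. c * grad_f_over_rho \<epsilon> 0 q) q = c * (- 2 * f_of q / (rho_of \<epsilon> q) ^ 3)"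
    and "pdiff 0 (\<lambda>q. c * grad_f_over_rho \<epsilon> 1 q) q = c * (- 2 * f_of q / (rho_of \<epsilon> q) ^ 3)"
  using grad_f_over_rho_has_mixed_derivative[OF assms, THEN DERIV_cmult] by (auto intro: pdiff_eqI)

lemma is_x_not_is_t: "is_x n i \<Longrightarrow> \<not> is_t n m i"
  by (simp add: is_x_def is_t_def)

lemma gbar_symmetric: "gbar n m \<epsilon> \<phi>x \<phi>t q i j = gbar n m \<epsilon> \<phi>x \<phi>t q j i"
  by (auto simp: gbar_def sphere_metric_def mult.commute)

lemma gbar_row_u: "1 \<le> n \<Longrightarrow> gbar n m \<epsilon> \<phi>x \<phi>t q 0 j = (if j = 1 then -2 else 0)"
  by (auto simp: gbar_def is_x_def is_t_def)

lemma gbar_row_v: "1 \<le> n \<Longrightarrow> gbar n m \<epsilon> \<phi>x \<phi>t q 1 j = (if j = 0 then -2 else 0)"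
  by (auto simp: gbar_def is_x_def is_t_def)

lemma gbar_x_row:
  "is_x n i \<Longrightarrow> gbar n m \<epsilon> \<phi>x \<phi>t q i k =
     (if is_x n k then (rho_of \<epsilon> q)\<^sup>2 * sphere_metric (n - 1) \<phi>x (ang_x n q) (i - 2) (k - 2) else 0)"
  unfolding gbar_def is_x_def is_t_def by auto

lemma gbar_t_row:
  "1 \<le> n \<Longrightarrow> is_t n m i \<Longrightarrow> gbar n m \<epsilon> \<phi>x \<phi>t q i k =
     (if is_t n m k then - (tau_of q)\<^sup>2 * sphere_metric (m - 1) \<phi>t (ang_t n m q) (i - (n + 1)) (k - (n + 1))
      else 0)"
  unfolding gbar_def is_x_def is_t_def by auto

lemma block_row_right_inverse:
  fixes G K A H :: "nat \<Rightarrow> nat \<Rightarrow> real"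
  assumes "a + l \<le> d" and "a \<le> i" and "i < a + l" and "c \<noteq> 0"
    and G: "\<And>k. G i k = (if a \<le> k \<and> k < a + l then c * A (i - a) (k - a) else 0)"
    and K: "\<And>k. a \<le> k \<Longrightarrow> k < a + l \<Longrightarrow> K k j = (if a \<le> j \<and> j < a + l then H (k - a) (j - a) / c else 0)"
    and AH: "\<And>x y. x < l \<Longrightarrow> y < l \<Longrightarrow> (\<Sum>z<l. A x z * H z y) = (if x = y then 1 else 0)"
  shows "(\<Sum>k<d. G i k * K k j) = (if i = j then 1 else 0)"
proof -
  have "(\<Sum>k<d. G i k * K k j) = (\<Sum>z<l. G i (a + z) * K (a + z) j)"
    by (rule sum_lessThan_block) (use assms(1) G in auto)
  also have "\<dots> = (\<Sum>z<l. if a \<le> j \<and> j < a + l then A (i - a) z * H z (j - a) else 0)"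
    by (intro sum.cong refl) (use \<open>c \<noteq> 0\<close> in \<open>simp add: G K\<close>)
  also have "\<dots> = (if i = j then 1 else 0)"
    using AH[of "i - a" "j - a"] assms(2,3) by (cases "a \<le> j \<and> j < a + l") auto
  finally show ?thesis .
qed

lemma has_right_inverse_gbar:
  assumes "1 \<le> n" and "1 \<le> m" and "rho_of \<epsilon> q \<noteq> 0" and "tau_of q \<noteq> 0"
    and "has_right_inverse (n - 1) (sphere_metric (n - 1) \<phi>x (ang_x n q))"
    and "has_right_inverse (m - 1) (sphere_metric (m - 1) \<phi>t (ang_t n m q))"
  shows "has_right_inverse (n + m) (gbar n m \<epsilon> \<phi>x \<phi>t q)"
proof -
  obtain Hx where Hx: "\<And>a b. a < n - 1 \<Longrightarrow> b < n - 1 \<Longrightarrow>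
      (\<Sum>c<n - 1. sphere_metric (n - 1) \<phi>x (ang_x n q) a c * Hx c b) = (if a = b then 1 else 0)"
    using assms(5) unfolding has_right_inverse_def by blast
  obtain Ht where Ht: "\<And>a b. a < m - 1 \<Longrightarrow> b < m - 1 \<Longrightarrow>
      (\<Sum>c<m - 1. sphere_metric (m - 1) \<phi>t (ang_t n m q) a c * Ht c b) = (if a = b then 1 else 0)"
    using assms(6) unfolding has_right_inverse_def by blast
  define K where "K i j =
      (if (i = 0 \<and> j = 1) \<or> (i = 1 \<and> j = 0) then -1/2
       else if is_x n i \<and> is_x n j then Hx (i - 2) (j - 2) / (rho_of \<epsilon> q)\<^sup>2
       else if is_t n m i \<and> is_t n m j then Ht (i - (n + 1)) (j - (n + 1)) / - (tau_of q)\<^sup>2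
       else 0)" for i j
  let ?G = "gbar n m \<epsilon> \<phi>x \<phi>t q"
  have "(\<Sum>k<n + m. ?G i k * K k j) = (if i = j then 1 else 0)" if "i < n + m" "j < n + m" for i j
  proof -
    consider "i = 0" | "i = 1" | "is_x n i" | "is_t n m i"
      using \<open>i < n + m\<close> by (force simp: is_x_def is_t_def)
    then show ?thesis
    proof cases
      case 1
      then have "(\<Sum>k<n + m. ?G i k * K k j) = -2 * K 1 j"
        using assms(1,2) by (simp add: gbar_row_u if_distrib[of "\<lambda>x. x * _"] cong: if_cong)
      then show ?thesis using 1 assms(1) by (auto simp: K_def is_x_def is_t_def)
    next
      case 2
      then have "(\<Sum>k<n + m. ?G i k * K k j) = -2 * K 0 j"
        using assms(1,2) by (simp add: gbar_row_v if_distrib[of "\<lambda>x. x * _"] cong: if_cong)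
      then show ?thesis using 2 assms(1) by (auto simp: K_def is_x_def is_t_def)
    next
      case 3
      show ?thesis
        by (rule block_row_right_inverse[where a = 2 and l = "n - 1" and c = "(rho_of \<epsilon> q)\<^sup>2"
              and A = "sphere_metric (n - 1) \<phi>x (ang_x n q)" and H = Hx])
          (use 3 assms(1-3) Hx in \<open>auto simp: gbar_x_row K_def is_x_def is_t_def\<close>)
    next
      case 4
      show ?thesis
        by (rule block_row_right_inverse[where a = "n + 1" and l = "m - 1" and c = "- (tau_of q)\<^sup>2"
              and A = "sphere_metric (m - 1) \<phi>t (ang_t n m q)" and H = Ht])
          (use 4 assms(1,2,4) Ht in \<open>auto simp: gbar_t_row K_def is_x_def is_t_def\<close>)
    qed
  qed
  then show ?thesis unfolding has_right_inverse_def by blast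
qed

text \<open>\<open>gbar_warp n m \<epsilon> k q i\<close> is the logarithmic \<open>\<partial>\<^sub>k\<close>-derivative of the warping factor
  (\<open>\<rho>\<^sup>2\<close> or \<open>-\<tau>\<^sup>2\<close>) in row \<open>i\<close> of the metric.\<close>

definition gbar_warp :: "nat \<Rightarrow> nat \<Rightarrow> real \<Rightarrow> nat \<Rightarrow> (nat \<Rightarrow> real) \<Rightarrow> nat \<Rightarrow> real" where
  "gbar_warp n m \<epsilon> k q i =
     (if is_x n i then 2 * drho \<epsilon> k q / rho_of \<epsilon> q else if is_t n m i then 2 / tau_of q else 0)"

lemma ang_x_upd: "k < 2 \<Longrightarrow> ang_x n (q(k := s)) = ang_x n q"
  by (auto simp: ang_x_def)

lemma ang_t_upd: "1 \<le> n \<Longrightarrow> k < 2 \<Longrightarrow> ang_t n m (q(k := s)) = ang_t n m q"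
  by (auto simp: ang_t_def)

lemma pdiff_gbar:
  assumes "1 \<le> n" and "k < 2" and "rho_of \<epsilon> q \<noteq> 0" and "tau_of q \<noteq> 0"
  shows "pdiff k (\<lambda>q. gbar n m \<epsilon> \<phi>x \<phi>t q i j) q = gbar_warp n m \<epsilon> k q i * gbar n m \<epsilon> \<phi>x \<phi>t q i j"
proof -
  consider (x) "is_x n i" "is_x n j" | (t) "is_t n m i" "is_t n m j"
    | (const) "\<not> (is_x n i \<and> is_x n j)" "\<not> (is_t n m i \<and> is_t n m j)"
    by blast
  then show ?thesis
  proof cases
    case x
    let ?X = "sphere_metric (n - 1) \<phi>x (ang_x n q) (i - 2) (j - 2)"
    have "gbar n m \<epsilon> \<phi>x \<phi>t (q(k := s)) i j = (rho_of \<epsilon> (q(k := s)))\<^sup>2 * ?X" for s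
      using x by (simp add: gbar_x_row ang_x_upd[OF assms(2)])
    then have "pdiff k (\<lambda>q. gbar n m \<epsilon> \<phi>x \<phi>t q i j) q = 2 * rho_of \<epsilon> q * drho \<epsilon> k q * ?X"
      by (intro pdiff_eqI) (auto intro!: derivative_eq_intros rho_of_has_derivative assms(2))
    then show ?thesis
      using x assms(3) by (simp add: gbar_warp_def gbar_x_row power2_eq_square)
  next
    case t
    let ?X = "sphere_metric (m - 1) \<phi>t (ang_t n m q) (i - (n + 1)) (j - (n + 1))"
    have "gbar n m \<epsilon> \<phi>x \<phi>t (q(k := s)) i j = - (tau_of (q(k := s)))\<^sup>2 * ?X" for s
      using t assms(1) by (simp add: gbar_t_row ang_t_upd[OF assms(1,2)])
    then have "pdiff k (\<lambda>q. gbar n m \<epsilon> \<phi>x \<phi>t q i j) q = - (2 * tau_of q * ?X)"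
      by (intro pdiff_eqI) (auto intro!: derivative_eq_intros tau_of_has_derivative assms(2))
    then show ?thesis
      using t assms(1,4) is_x_not_is_t[of n i m]
      by (auto simp: gbar_warp_def gbar_t_row power2_eq_square)
  next
    case const
    then have "gbar n m \<epsilon> \<phi>x \<phi>t q' i j = (if (i = 0 \<and> j = 1) \<or> (i = 1 \<and> j = 0) then -2 else 0)" for q'
      by (auto simp: gbar_def)
    moreover have "gbar_warp n m \<epsilon> k q i = 0" if "i < 2"
      using that assms(1) by (auto simp: gbar_warp_def is_x_def is_t_def)
    ultimately show ?thesis
      by (auto intro: pdiff_const_along)
  qed
qed

lemma sum_gbar_warp:
  assumes "1 \<le> n" and "1 \<le> m"
  shows "(\<Sum>i<n + m. gbar_warp n m \<epsilon> k q i)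
           = (real n - 1) * (2 * drho \<epsilon> k q / rho_of \<epsilon> q) + (real m - 1) * (2 / tau_of q)"
proof -
  have x: "(\<Sum>i<n + m. if is_x n i then A else 0) = (real n - 1) * A" for A
  proof -
    have "(\<Sum>i<n + m. if is_x n i then A else 0) = (\<Sum>c<n - 1. if is_x n (2 + c) then A else 0)"
      by (rule sum_lessThan_block) (use assms in \<open>auto simp: is_x_def\<close>)
    also have "\<dots> = (\<Sum>c<n - 1. A)"
      by (intro sum.cong) (auto simp: is_x_def)
    finally show ?thesis using assms(1) by simp
  qed
  have t: "(\<Sum>i<n + m. if is_t n m i then A else 0) = (real m - 1) * A" for A
  proof -
    have "(\<Sum>i<n + m. if is_t n m i then A else 0) = (\<Sum>c<m - 1. if is_t n m (n + 1 + c) then A else 0)"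
      by (rule sum_lessThan_block) (use assms in \<open>auto simp: is_t_def\<close>)
    also have "\<dots> = (\<Sum>c<m - 1. A)"
      by (intro sum.cong) (auto simp: is_t_def)
    finally show ?thesis using assms(2) by simp
  qed
  have "gbar_warp n m \<epsilon> k q i = (if is_x n i then 2 * drho \<epsilon> k q / rho_of \<epsilon> q else 0)
      + (if is_t n m i then 2 / tau_of q else 0)" for i
    by (auto simp: gbar_warp_def dest: is_x_not_is_t)
  then show ?thesis by (simp add: sum.distrib x t)
qed

lemma gbar_warp_euler_x:
  assumes "is_x n i"
  shows "q 1 * gbar_warp n m \<epsilon> 1 q i + q 0 * gbar_warp n m \<epsilon> 0 q i
           = 2 * (rho_of \<epsilon> q + 2 * \<epsilon> * f_of q) / rho_of \<epsilon> q"
proof -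
  have "q 1 * gbar_warp n m \<epsilon> 1 q i + q 0 * gbar_warp n m \<epsilon> 0 q i
      = 2 * (q 1 * drho \<epsilon> 1 q + q 0 * drho \<epsilon> 0 q) / rho_of \<epsilon> q"
    using assms by (simp add: gbar_warp_def add_divide_distrib algebra_simps)
  then show ?thesis by (simp only: drho_euler)
qed

lemma gbar_warp_euler_t:
  assumes "is_t n m i" and "tau_of q \<noteq> 0"
  shows "q 1 * gbar_warp n m \<epsilon> 1 q i + q 0 * gbar_warp n m \<epsilon> 0 q i = 2"
proof -
  have "\<not> is_x n i" using assms(1) is_x_not_is_t by blast
  then have "q 1 * gbar_warp n m \<epsilon> 1 q i + q 0 * gbar_warp n m \<epsilon> 0 q i = 2 * (q 0 + q 1) / tau_of q"
    using assms(1) by (simp add: gbar_warp_def add_divide_distrib algebra_simps)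
  also have "\<dots> = 2"
    using assms(2) by (simp add: tau_of_def u_of_def v_of_def field_simps)
  finally show ?thesis .
qed

lemma bilin_eq_sum: "bilin d B X Y = (\<Sum>i<d. X i * (\<Sum>j<d. Y j * B i j))"
  by (simp add: bilin_def sum_distrib_left mult.assoc)

lemma sum_frame:
  assumes "2 \<le> d" and "\<beta> < d"
  shows "(\<Sum>j<d. frame p \<beta> j * Z j) =
           (if \<beta> < 2 then frame p \<beta> 0 * Z 0 + frame p \<beta> 1 * Z 1 else Z \<beta>)"
proof (cases "\<beta> < 2")
  case True
  have "(\<Sum>j<d. frame p \<beta> j * Z j) = frame p \<beta> 0 * Z 0 + frame p \<beta> 1 * Z 1"
    by (rule sum_lessThan_two) (use assms True in \<open>auto simp: frame_def\<close>)
  then show ?thesis using True by simp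
next
  case False
  then have "(\<Sum>j<d. frame p \<beta> j * Z j) = (\<Sum>j<d. if j = \<beta> then Z j else 0)"
    by (intro sum.cong refl) (auto simp: frame_def)
  then show ?thesis using False assms(2) by simp
qed

lemma frame_null_pairing:
  assumes "f_of p > 0" and "\<alpha> < 2" and "\<beta> < 2"
  shows "frame p \<alpha> 0 * frame p \<beta> 1 + frame p \<alpha> 1 * frame p \<beta> 0 =
           (if \<alpha> \<noteq> \<beta> then 0 else if \<alpha> = 0 then 1/2 else -1/2)"
proof -
  have sq: "sqrt (f_of p) * sqrt (f_of p) = f_of p" using assms(1) by simp
  have uv: "u_of p * v_of p = - f_of p" by (simp add: f_of_def)
  consider "\<alpha> = 0" | "\<alpha> = 1" using assms(2) by linarith
  moreover consider "\<beta> = 0" | "\<beta> = 1" using assms(3) by linarith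
  ultimately show ?thesis
    using assms(1) by cases (auto simp: frame_def field_simps sq uv)
qed

locale gbar_chart =
  fixes n m :: nat and \<epsilon> :: real and \<phi>x \<phi>t :: "(nat \<Rightarrow> real) \<Rightarrow> nat \<Rightarrow> real"
    and p :: "nat \<Rightarrow> real" and \<delta> :: real
  assumes n_pos: "1 \<le> n" and m_pos: "1 \<le> m" and \<delta>_pos: "0 < \<delta>"
    and chart_x: "\<And>\<theta>. \<forall>a<n - 1. \<bar>\<theta> a - ang_x n p a\<bar> < \<delta> \<Longrightarrow> \<forall>a\<ge>n - 1. \<theta> a = 0 \<Longrightarrow>
        has_right_inverse (n - 1) (sphere_metric (n - 1) \<phi>x \<theta>)"
    and chart_t: "\<And>\<theta>. \<forall>a<m - 1. \<bar>\<theta> a - ang_t n m p a\<bar> < \<delta> \<Longrightarrow> \<forall>a\<ge>m - 1. \<theta> a = 0 \<Longrightarrow>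
        has_right_inverse (m - 1) (sphere_metric (m - 1) \<phi>t \<theta>)"
    and rho_p: "rho_of \<epsilon> p \<noteq> 0" and tau_p: "tau_of p \<noteq> 0"
begin

abbreviation G :: "(nat \<Rightarrow> real) \<Rightarrow> nat \<Rightarrow> nat \<Rightarrow> real" where
  "G \<equiv> gbar n m \<epsilon> \<phi>x \<phi>t"

text \<open>\<open>wbar\<close> is built from \<open>mat_inv\<close>, a choice that is meaningful only where \<open>gbar\<close> is
  invertible; its derivatives at \<open>p\<close> are therefore computed on this neighbourhood.\<close>

definition near :: "(nat \<Rightarrow> real) set" where
  "near = {q. (\<forall>k<n + m. \<bar>q k - p k\<bar> < \<delta>) \<and> rho_of \<epsilon> q \<noteq> 0 \<and> tau_of q \<noteq> 0}"

lemma p_near: "p \<in> near"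
  using \<delta>_pos rho_p tau_p by (simp add: near_def)

lemma near_nonzero: "q \<in> near \<Longrightarrow> rho_of \<epsilon> q \<noteq> 0" "q \<in> near \<Longrightarrow> tau_of q \<noteq> 0"
  by (simp_all add: near_def)

lemma has_right_inverse_near:
  assumes "q \<in> near"
  shows "has_right_inverse (n + m) (G q)"
proof (rule has_right_inverse_gbar[OF n_pos m_pos near_nonzero[OF assms]])
  have close: "\<bar>q k - p k\<bar> < \<delta>" if "k < n + m" for k
    using assms that by (simp add: near_def)
  show "has_right_inverse (n - 1) (sphere_metric (n - 1) \<phi>x (ang_x n q))"
    by (rule chart_x) (use close m_pos in \<open>auto simp: ang_x_def\<close>)
  show "has_right_inverse (m - 1) (sphere_metric (m - 1) \<phi>t (ang_t n m q))"
    by (rule chart_t) (use close in \<open>auto simp: ang_t_def\<close>)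
qed

sublocale null_warped_metric "n + m" G near "gbar_warp n m \<epsilon>"
proof
  show "2 \<le> n + m" using n_pos m_pos by simp
  show "G q i j = G q j i" for q i j by (rule gbar_symmetric)
  show "G q 0 j = (if j = 1 then -2 else 0)" for q j using n_pos by (rule gbar_row_u)
  show "G q 1 j = (if j = 0 then -2 else 0)" for q j using n_pos by (rule gbar_row_v)
  show "q \<in> near \<Longrightarrow> has_right_inverse (n + m) (G q)" for q by (rule has_right_inverse_near)
  show "q \<in> near \<Longrightarrow> k < 2 \<Longrightarrow> pdiff k (\<lambda>q. G q i j) q = gbar_warp n m \<epsilon> k q i * G q i j"
    for q k i j by (rule pdiff_gbar[OF n_pos _ near_nonzero])
qed

lemma eventually_near_along:
  assumes "q \<in> near"
  shows "eventually (\<lambda>s. q(k := s) \<in> near) (nhds (q k))"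
proof -
  have cont: "continuous_on UNIV (\<lambda>s. (q(k := s)) j)" for j
    by (cases "j = k") (simp_all add: continuous_on_id continuous_on_const)
  have open_ev: "eventually P (nhds (q k))" if "open {s. P s}" and "P (q k)" for P
    using eventually_nhds_in_open[OF that(1)] that(2) by simp
  have "open {s. rho_of \<epsilon> (q(k := s)) \<noteq> 0}" "open {s. tau_of (q(k := s)) \<noteq> 0}"
    unfolding rho_of_def r_of_def f_of_def tau_of_def u_of_def v_of_def
    by (intro open_Collect_neq continuous_intros cont)+
  then have "eventually (\<lambda>s. rho_of \<epsilon> (q(k := s)) \<noteq> 0) (nhds (q k))"
    and "eventually (\<lambda>s. tau_of (q(k := s)) \<noteq> 0) (nhds (q k))"
    using assms by (auto intro!: open_ev simp: near_def)
  moreover have "eventually (\<lambda>s. \<forall>j\<in>{..<n + m}. \<bar>(q(k := s)) j - p j\<bar> < \<delta>) (nhds (q k))"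
    using assms by (intro eventually_ball_finite ballI open_ev open_Collect_less continuous_intros cont)
      (auto simp: near_def)
  ultimately show ?thesis
    by eventually_elim (auto simp: near_def)
qed

lemma pdiff_cong_near:
  assumes "q \<in> near" and "\<And>q. q \<in> near \<Longrightarrow> F q = F' q"
  shows "pdiff k F q = pdiff k F' q"
  using eventually_near_along[OF assms(1), of k]
  by (intro pdiff_cong_eventually) (auto elim: eventually_mono simp: assms(2))

lemma sum_gbar_warp_euler:
  assumes "q \<in> near"
  shows "q 1 * (\<Sum>i<n + m. gbar_warp n m \<epsilon> 1 q i) + q 0 * (\<Sum>i<n + m. gbar_warp n m \<epsilon> 0 q i)
           = 2 * (real n - 1) * (rho_of \<epsilon> q + 2 * \<epsilon> * f_of q) / rho_of \<epsilon> q + 2 * (real m - 1)"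
proof -
  have "q 1 * (\<Sum>i<n + m. gbar_warp n m \<epsilon> 1 q i) + q 0 * (\<Sum>i<n + m. gbar_warp n m \<epsilon> 0 q i)
      = 2 * (real n - 1) * (q 1 * drho \<epsilon> 1 q + q 0 * drho \<epsilon> 0 q) / rho_of \<epsilon> q
        + 2 * (real m - 1) * (q 0 + q 1) / tau_of q"
    unfolding sum_gbar_warp[OF n_pos m_pos] using near_nonzero[OF assms] by (simp add: field_simps)
  then show ?thesis
    using near_nonzero[OF assms] by (simp add: drho_euler tau_of_def u_of_def v_of_def)
qed

lemma sum_gbar_warp_weighted:
  assumes "q \<in> near"
  shows "(q 0)\<^sup>2 * (\<Sum>i<n + m. gbar_warp n m \<epsilon> 0 q i) - (q 1)\<^sup>2 * (\<Sum>i<n + m. gbar_warp n m \<epsilon> 1 q i)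
           = 2 * (real n - 1) * (2 * f_of q - r_of q * rho_of \<epsilon> q) / rho_of \<epsilon> q - 2 * (real m - 1) * r_of q"
proof -
  have "(q 0)\<^sup>2 * (\<Sum>i<n + m. gbar_warp n m \<epsilon> 0 q i) - (q 1)\<^sup>2 * (\<Sum>i<n + m. gbar_warp n m \<epsilon> 1 q i)
      = 2 * (real n - 1) * ((q 0)\<^sup>2 * drho \<epsilon> 0 q - (q 1)\<^sup>2 * drho \<epsilon> 1 q) / rho_of \<epsilon> q
        + 2 * (real m - 1) * ((q 0)\<^sup>2 - (q 1)\<^sup>2) / tau_of q"
    unfolding sum_gbar_warp[OF n_pos m_pos] using near_nonzero[OF assms] by (simp add: field_simps)
  then show ?thesis
    using near_nonzero[OF assms] by (simp add: drho_weighted square_diff_uv)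
qed

lemma dalembert_f_of:
  assumes "q \<in> near"
  shows "dalembert (n + m) G f_of q = (real n + real m) / 2 + (real n - 1) * \<epsilon> * f_of q / rho_of \<epsilon> q"
proof -
  have "dalembert (n + m) G f_of q = 1 + (q 1 * (\<Sum>i<n + m. gbar_warp n m \<epsilon> 1 q i)
      + q 0 * (\<Sum>i<n + m. gbar_warp n m \<epsilon> 0 q i)) / 4"
    by (subst dalembert_eq[OF assms]) (simp_all add: pdiff_f_of pdiff_pdiff_f_of field_simps)
  then show ?thesis
    unfolding sum_gbar_warp_euler[OF assms] using near_nonzero[OF assms] by (simp add: field_simps)
qed

lemma wbar_eq_formula:
  assumes "q \<in> near"
  shows "wbar n m \<epsilon> \<phi>x \<phi>t q = wbar_formula n m \<epsilon> q"
  unfolding wbar_def dalembert_f_of[OF assms] hbar_def wbar_formula_def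
  using near_nonzero[OF assms] by (simp add: field_simps)

lemma dalembert_wbar:
  "dalembert (n + m) G (wbar n m \<epsilon> \<phi>x \<phi>t) p =
     - ((real n - 2) * \<epsilon> / (2 * rho_of \<epsilon> p)) *
       ((real n - 3) * f_of p / (rho_of \<epsilon> p)\<^sup>2 - (real n + real m - 2) * r_of p / (2 * rho_of \<epsilon> p))"
proof -
  let ?w = "wbar n m \<epsilon> \<phi>x \<phi>t" and ?K = "(real n - 2) * \<epsilon> / 2" and ?\<rho> = "rho_of \<epsilon> p"
  have grad: "pdiff j ?w q = ?K * grad_f_over_rho \<epsilon> j q" if "q \<in> near" for j q
    using pdiff_cong_near[OF that wbar_eq_formula] pdiff_wbar_formula[OF near_nonzero(1)[OF that]]
    by simp
  have hess: "pdiff i (\<lambda>q. pdiff j ?w q) p = pdiff i (\<lambda>q. ?K * grad_f_over_rho \<epsilon> j q) p" for i j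
    by (rule pdiff_cong_near[OF p_near]) (rule grad)
  have "dalembert (n + m) G ?w p =
      - (pdiff 0 (\<lambda>q. pdiff 1 ?w q) p + pdiff 1 (\<lambda>q. pdiff 0 ?w q) p) / 2
      - (pdiff 0 ?w p * (\<Sum>i<n + m. gbar_warp n m \<epsilon> 1 p i)
         + pdiff 1 ?w p * (\<Sum>i<n + m. gbar_warp n m \<epsilon> 0 p i)) / 4"
    by (rule dalembert_eq[OF p_near])
      (simp_all add: grad[OF p_near] hess grad_f_over_rho_def pdiff_const_along)
  also have "\<dots> = 2 * ?K * f_of p / ?\<rho> ^ 3
      - ?K * ((p 0)\<^sup>2 * (\<Sum>i<n + m. gbar_warp n m \<epsilon> 0 p i)
              - (p 1)\<^sup>2 * (\<Sum>i<n + m. gbar_warp n m \<epsilon> 1 p i)) / (4 * ?\<rho>\<^sup>2)"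
    unfolding hess grad[OF p_near] pdiff_scaled_grad_f_over_rho[OF rho_p]
    using rho_p by (simp add: grad_f_over_rho_def field_simps)
  also have "\<dots> = - ((real n - 2) * \<epsilon> / (2 * ?\<rho>)) *
       ((real n - 3) * f_of p / ?\<rho>\<^sup>2 - (real n + real m - 2) * r_of p / (2 * ?\<rho>))"
    unfolding sum_gbar_warp_weighted[OF p_near] using rho_p
    by (simp add: field_simps power2_eq_square power3_eq_cube)
  finally show ?thesis .
qed

lemma gbar_null_angular:
  assumes "i < 2" and "2 \<le> j"
  shows "G q i j = 0" and "G q j i = 0"
proof -
  consider "i = 0" | "i = 1" using assms(1) by linarith
  then show "G q i j = 0" by cases (use assms(2) in \<open>simp_all add: row_u row_v\<close>)
  then show "G q j i = 0" by (simp add: symmetric)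
qed

lemma pibar_eq_hessian:
  assumes "q \<in> near"
  shows "pibar n m \<epsilon> \<phi>x \<phi>t q i j = (if (i = 0 \<and> j = 1) \<or> (i = 1 \<and> j = 0) then -1 else 0)
     + ((q 1 * gbar_warp n m \<epsilon> 1 q i + q 0 * gbar_warp n m \<epsilon> 0 q i) / 4 - hbar \<epsilon> q) * G q i j"
proof -
  have "hessian (n + m) G f_of q i j = pdiff i (\<lambda>q. pdiff j f_of q) q
      - G q i j * (gbar_warp n m \<epsilon> 1 q i * pdiff 0 f_of q + gbar_warp n m \<epsilon> 0 q i * pdiff 1 f_of q) / 4"
    by (rule hessian_eq[OF assms]) (simp add: pdiff_f_of)
  then show ?thesis
    unfolding pibar_def pdiff_pdiff_f_of by (simp add: pdiff_f_of field_simps)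
qed

lemma pibar_eq:
  assumes "q \<in> near"
  shows "pibar n m \<epsilon> \<phi>x \<phi>t q i j =
     (if (i = 0 \<and> j = 1) \<or> (i = 1 \<and> j = 0) then \<epsilon> * f_of q / rho_of \<epsilon> q
      else if is_x n i then \<epsilon> * f_of q / (2 * rho_of \<epsilon> q) * G q i j
      else if is_t n m i then - (\<epsilon> * f_of q / (2 * rho_of \<epsilon> q)) * G q i j
      else 0)"
proof -
  note \<pi> = pibar_eq_hessian[OF assms] and \<rho> = near_nonzero(1)[OF assms]
  consider (uv) "(i = 0 \<and> j = 1) \<or> (i = 1 \<and> j = 0)" | (x) "is_x n i" | (t) "is_t n m i"
    | (zero) "\<not> ((i = 0 \<and> j = 1) \<or> (i = 1 \<and> j = 0))" "\<not> is_x n i" "\<not> is_t n m i"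
    by blast
  then show ?thesis
  proof cases
    case uv
    then show ?thesis
      using n_pos \<rho> by (auto simp: \<pi> gbar_def gbar_warp_def is_x_def is_t_def hbar_def field_simps)
  next
    case x
    then show ?thesis
      using \<rho> by (auto simp: \<pi> gbar_warp_euler_x is_x_def hbar_def field_simps)
  next
    case t
    moreover have "\<not> is_x n i" using t is_x_not_is_t by blast
    ultimately show ?thesis
      using n_pos near_nonzero(2)[OF assms] by (auto simp: \<pi> gbar_warp_euler_t is_t_def hbar_def)
  next
    case zero
    then have "G q i j = 0" by (simp add: gbar_def)
    then show ?thesis using zero by (auto simp: \<pi>)
  qed
qed

lemma pibar_frame:
  assumes "f_of p > 0" and "\<alpha> < n + m" and "\<beta> < n + m"
  shows "bilin (n + m) (pibar n m \<epsilon> \<phi>x \<phi>t p) (frame p \<alpha>) (frame p \<beta>) =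
     (if \<alpha> = 0 \<and> \<beta> = 0 then \<epsilon> * f_of p / (2 * rho_of \<epsilon> p)
      else if \<alpha> = 1 \<and> \<beta> = 1 then - (\<epsilon> * f_of p / (2 * rho_of \<epsilon> p))
      else if is_x n \<alpha> \<and> is_x n \<beta> then \<epsilon> * f_of p / (2 * rho_of \<epsilon> p) * G p \<alpha> \<beta>
      else if is_t n m \<alpha> \<and> is_t n m \<beta> then - (\<epsilon> * f_of p / (2 * rho_of \<epsilon> p)) * G p \<alpha> \<beta>
      else 0)"
proof -
  let ?\<pi> = "pibar n m \<epsilon> \<phi>x \<phi>t p"
  let ?row = "\<lambda>i. if \<beta> < 2 then frame p \<beta> 0 * ?\<pi> i 0 + frame p \<beta> 1 * ?\<pi> i 1 else ?\<pi> i \<beta>"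
  have two: "2 \<le> n + m" using n_pos m_pos by simp
  have bilin: "bilin (n + m) ?\<pi> (frame p \<alpha>) (frame p \<beta>) =
      (if \<alpha> < 2 then frame p \<alpha> 0 * ?row 0 + frame p \<alpha> 1 * ?row 1 else ?row \<alpha>)"
    unfolding bilin_eq_sum sum_frame[OF two assms(3)] sum_frame[OF two assms(2)] ..
  note \<pi> = pibar_eq[OF p_near]
  have not_xt: "\<not> is_x n 0" "\<not> is_x n 1" "\<not> is_t n m 0" "\<not> is_t n m 1"
    using n_pos by (auto simp: is_x_def is_t_def)
  consider (null) "\<alpha> < 2" "\<beta> < 2" | (mixed) "(\<alpha> < 2) \<noteq> (\<beta> < 2)" | (angular) "2 \<le> \<alpha>" "2 \<le> \<beta>"
    by linarith
  then show ?thesis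
  proof cases
    case null
    have "bilin (n + m) ?\<pi> (frame p \<alpha>) (frame p \<beta>) =
        \<epsilon> * f_of p / rho_of \<epsilon> p * (frame p \<alpha> 0 * frame p \<beta> 1 + frame p \<alpha> 1 * frame p \<beta> 0)"
      unfolding bilin using null not_xt by (simp add: \<pi> algebra_simps)
    then show ?thesis
      using null not_xt frame_null_pairing[OF assms(1) null] by auto
  next
    case mixed
    then show ?thesis
      unfolding bilin using not_xt by (auto simp: \<pi> gbar_null_angular)
  next
    case angular
    then show ?thesis
      unfolding bilin using not_xt is_x_not_is_t[of n \<alpha> m]
      by (auto simp: \<pi> gbar_x_row gbar_t_row n_pos)
  qed
qed

end

lemma local_sphere_chart_invertible_near:
  assumes "local_sphere_chart k \<phi> \<theta>0"
  obtains e where "0 < e"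
    and "\<And>\<theta>. \<forall>a<k. \<bar>\<theta> a - \<theta>0 a\<bar> < e \<Longrightarrow> \<forall>a\<ge>k. \<theta> a = 0 \<Longrightarrow>
           has_right_inverse k (sphere_metric k \<phi> \<theta>)"
  using assms unfolding local_sphere_chart_def has_right_inverse_def by blast

theorem proposition3p7:
  fixes n m :: nat and \<epsilon> :: real
    and \<phi>x \<phi>t :: "(nat \<Rightarrow> real) \<Rightarrow> nat \<Rightarrow> real"
    and p :: "nat \<Rightarrow> real"
  assumes "1 \<le> n" and "1 \<le> m"
    and "local_sphere_chart (n - 1) \<phi>x (ang_x n p)"
    and "local_sphere_chart (m - 1) \<phi>t (ang_t n m p)"
    and "tau_of p > 0" and "r_of p > 0"
    and "f_of p > 0"
    and "rho_of \<epsilon> p \<noteq> 0"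
  shows "\<forall>\<alpha><n + m. \<forall>\<beta><n + m.
           bilin (n + m) (pibar n m \<epsilon> \<phi>x \<phi>t p) (frame p \<alpha>) (frame p \<beta>) =
             (if \<alpha> = 0 \<and> \<beta> = 0 then \<epsilon> * f_of p / (2 * rho_of \<epsilon> p)
              else if \<alpha> = 1 \<and> \<beta> = 1 then - (\<epsilon> * f_of p / (2 * rho_of \<epsilon> p))
              else if is_x n \<alpha> \<and> is_x n \<beta> then
                \<epsilon> * f_of p / (2 * rho_of \<epsilon> p) * gbar n m \<epsilon> \<phi>x \<phi>t p \<alpha> \<beta>
              else if is_t n m \<alpha> \<and> is_t n m \<beta> then
                - (\<epsilon> * f_of p / (2 * rho_of \<epsilon> p)) * gbar n m \<epsilon> \<phi>x \<phi>t p \<alpha> \<beta>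
              else 0) \<and>
         wbar n m \<epsilon> \<phi>x \<phi>t p =
           (real n + real m - 2) / 4 + (real n - 2) * \<epsilon> * f_of p / (2 * rho_of \<epsilon> p) \<and>
         dalembert (n + m) (gbar n m \<epsilon> \<phi>x \<phi>t) (wbar n m \<epsilon> \<phi>x \<phi>t) p =
           - ((real n - 2) * \<epsilon> / (2 * rho_of \<epsilon> p)) *
             ((real n - 3) * f_of p / (rho_of \<epsilon> p)\<^sup>2
              - (real n + real m - 2) * r_of p / (2 * rho_of \<epsilon> p))"
proof -
  obtain ex where ex: "0 < ex" "\<And>\<theta>. \<forall>a<n - 1. \<bar>\<theta> a - ang_x n p a\<bar> < ex \<Longrightarrow> \<forall>a\<ge>n - 1. \<theta> a = 0 \<Longrightarrow>
      has_right_inverse (n - 1) (sphere_metric (n - 1) \<phi>x \<theta>)"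
    using local_sphere_chart_invertible_near[OF assms(3)] by blast
  obtain et where et: "0 < et" "\<And>\<theta>. \<forall>a<m - 1. \<bar>\<theta> a - ang_t n m p a\<bar> < et \<Longrightarrow> \<forall>a\<ge>m - 1. \<theta> a = 0 \<Longrightarrow>
      has_right_inverse (m - 1) (sphere_metric (m - 1) \<phi>t \<theta>)"
    using local_sphere_chart_invertible_near[OF assms(4)] by blast
  interpret gbar_chart n m \<epsilon> \<phi>x \<phi>t p "min ex et"
    by unfold_locales (use assms(1,2,5,8) ex et in auto)
  show ?thesis
    using pibar_frame[OF assms(7)] wbar_eq_formula[OF p_near] dalembert_wbar
    by (simp add: wbar_formula_def)
qed

end
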